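(* For every admissible policy $\pi$ and every $T\ge1$, $$\mathcal R(\pi,T)-\tilde{\mathcal R}(\pi,T)\le G_T(\pi)+G_T(\pi^*(T)),$$ $$\mathcal R(\pi,T)-\tilde{\mathcal R}(\pi,T)\ge-\bigl(G_T(\pi)+G_T(\pi_{p^*})+\tilde{\mathcal R}(\pi_{p^*},T)\bigr),$$ where $G_T(\pi)=\bigl|\mathbb E[\mathcal U(\hat F^\pi_T)-\mathcal U(\tilde F^\pi_T)]\bigr|$.
   Context: Bandit setting: $K\ge1$, $\mathbb K=\{1,\dots,K\}$; arm $i$ produces i.i.d. rewards $X^{(i)}_1,X^{(i)}_2,\dots$ with distribution function $F^{(i)}$, all rewards mutually independent. An admissible policy $\pi=(\pi_1,\pi_2,\dots)$ chooses $\pi_t\in\mathbb K$ as a measurable function of a randomization variable $V$ independent of rewards and of past actions/rewards; $\tau_i(t)=\sum_{s\le t}\mathbf 1\{\pi_s=i\}$, the reward at time $t$ is $X^\pi_t=X^{(i)}_{\tau_i(t)}$ on $\{\pi_t=i\}$; $\Pi$ is the set of admissible policies. $\hat F^\pi_T(y)=\frac1T\sum_{t\le T}\mathbf 1\{X^\pi_t\le y\}$. $\Delta_{K-1}$ is the probability simplex, $F_p=\sum_ip_iF^{(i)}$, $\mathcal D^\Delta=\{F_p:p\in\Delta_{K-1}\}$. $(L,\|\cdot\|)$ is a normed space of bounded functions on $\mathbb R$ containing these distribution functions and $\mathcal U:L\to\mathbb R$. Let $\pi^*(T)\in\arg\max_{\pi\in\Pi}\mathbb E[\mathcal U(\hat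 F^\pi_T)]$ (assumed to exist) and $\mathcal R(\pi,T)=\mathbb E[\mathcal U(\hat F^{\pi^*(T)}_T)-\mathcal U(\hat F^\pi_T)]$. Let $p^*\in\arg\max_{p\in\Delta_{K-1}}\mathcal U(F_p)$ (assumed to exist), $\tilde F^\pi_T=\frac1T\sum_i\tau_i(T)F^{(i)}$ and $\tilde{\mathcal R}(\pi,T)=\mathbb E[\mathcal U(F_{p^*})-\mathcal U(\tilde F^\pi_T)]$. $\pi_{p^*}$ denotes the simple policy whose actions $\pi_1,\pi_2,\dots$ are i.i.d., $\sigma(V)$-measurable, with $\mathbb P(\pi_t=i)=p^*_i$. All expectations are assumed finite. *)

theory Defs
  imports "HOL-Probability.Probability"
begin

text \<open>Arms are 1..K; time steps are t = 1,2,...; the reward sequence of arm i is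
  X i 1, X i 2, ...; V is the (real-valued) randomization variable.\<close>

definition tau :: "(nat \<Rightarrow> 'a \<Rightarrow> nat) \<Rightarrow> nat \<Rightarrow> nat \<Rightarrow> 'a \<Rightarrow> nat" where
  "tau A i t \<omega> = card {s \<in> {1..t}. A s \<omega> = i}"

definition reward_proc :: "(nat \<Rightarrow> nat \<Rightarrow> 'a \<Rightarrow> real) \<Rightarrow> (nat \<Rightarrow> 'a \<Rightarrow> nat) \<Rightarrow> nat \<Rightarrow> 'a \<Rightarrow> real" where
  "reward_proc X A t \<omega> = X (A t \<omega>) (tau A (A t \<omega>) t \<omega>) \<omega>"

text \<open>Generators of the information available at time t: V and the past actions and rewards.\<close>
definition hist_sets :: "'a measure \<Rightarrow> ('a \<Rightarrow> real) \<Rightarrow> (nat \<Rightarrow> nat \<Rightarrow> 'a \<Rightarrow> real)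
    \<Rightarrow> (nat \<Rightarrow> 'a \<Rightarrow> nat) \<Rightarrow> nat \<Rightarrow> 'a set set" where
  "hist_sets M V X A t =
     {V -` B \<inter> space M | B. B \<in> sets borel} \<union>
     (\<Union>s\<in>{1..<t}. {A s -` B \<inter> space M | B. True} \<union>
                   {reward_proc X A s -` B \<inter> space M | B. B \<in> sets borel})"

definition admissible :: "'a measure \<Rightarrow> ('a \<Rightarrow> real) \<Rightarrow> (nat \<Rightarrow> nat \<Rightarrow> 'a \<Rightarrow> real)
    \<Rightarrow> nat \<Rightarrow> (nat \<Rightarrow> 'a \<Rightarrow> nat) \<Rightarrow> bool" where
  "admissible M V X K A \<longleftrightarrow>
     (\<forall>t\<ge>1. (\<forall>\<omega>\<in>space M. A t \<omega> \<in> {1..K}) \<and>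
            A t \<in> measurable (sigma (space M) (hist_sets M V X A t)) (count_space UNIV))"

definition simple_policy :: "'a measure \<Rightarrow> ('a \<Rightarrow> real) \<Rightarrow> nat \<Rightarrow> (nat \<Rightarrow> real)
    \<Rightarrow> (nat \<Rightarrow> 'a \<Rightarrow> nat) \<Rightarrow> bool" where
  "simple_policy M V K p A \<longleftrightarrow>
     (\<forall>t\<ge>1. (\<forall>\<omega>\<in>space M. A t \<omega> \<in> {1..K}) \<and>
            A t \<in> measurable (vimage_algebra (space M) V borel) (count_space UNIV) \<and>
            (\<forall>i\<in>{1..K}. measure M {\<omega>\<in>space M. A t \<omega> = i} = p i)) \<and>
     prob_space.indep_vars M (\<lambda>_. count_space UNIV) A {1..}"

definition prob_simplex :: "nat \<Rightarrow> (nat \<Rightarrow> real) set" where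
  "prob_simplex K = {p. (\<forall>i\<in>{1..K}. 0 \<le> p i) \<and> (\<Sum>i=1..K. p i) = 1}"

definition mixture :: "nat \<Rightarrow> (nat \<Rightarrow> real \<Rightarrow> real) \<Rightarrow> (nat \<Rightarrow> real) \<Rightarrow> real \<Rightarrow> real" where
  "mixture K F p = (\<lambda>y. \<Sum>i=1..K. p i * F i y)"

definition emp_cdf :: "(nat \<Rightarrow> nat \<Rightarrow> 'a \<Rightarrow> real) \<Rightarrow> (nat \<Rightarrow> 'a \<Rightarrow> nat) \<Rightarrow> nat \<Rightarrow> 'a \<Rightarrow> real \<Rightarrow> real" where
  "emp_cdf X A T \<omega> = (\<lambda>y. real (card {t \<in> {1..T}. reward_proc X A t \<omega> \<le> y}) / real T)"

definition mix_cdf :: "nat \<Rightarrow> (nat \<Rightarrow> real \<Rightarrow> real) \<Rightarrow> (nat \<Rightarrow> 'a \<Rightarrow> nat) \<Rightarrow> nat \<Rightarrow> 'a \<Rightarrow> real \<Rightarrow> real" where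
  "mix_cdf K F A T \<omega> = (\<lambda>y. (\<Sum>i=1..K. real (tau A i T \<omega>) * F i y) / real T)"

definition regret where
  "regret M X U Astar A T =
     integral\<^sup>L M (\<lambda>\<omega>. U (emp_cdf X Astar T \<omega>) - U (emp_cdf X A T \<omega>))"

definition proxy_regret where
  "proxy_regret M K F U pstar A T =
     integral\<^sup>L M (\<lambda>\<omega>. U (mixture K F pstar) - U (mix_cdf K F A T \<omega>))"

definition gap where
  "gap M K X F U A T =
     \<bar>integral\<^sup>L M (\<lambda>\<omega>. U (emp_cdf X A T \<omega>) - U (mix_cdf K F A T \<omega>))\<bar>"

end

theory Submission
  imports Defs
begin

text \<open>Write \<open>E\<close> for expectation. The regret splits as
  \<open>R(\<pi>) - R~(\<pi>) = (E U(F^\<pi>*) - U(F_p*)) - (E U(F^\<pi>) - E U(F~^\<pi>))\<close>, and the second bracket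
  is at most \<open>G(\<pi>)\<close> in absolute value. For every admissible policy the pull frequencies
  \<open>\<tau>_i(T)/T\<close> form a point of the simplex, so \<open>F~\<close> is a mixture and \<open>U(F~) \<le> U(F_p*)\<close>
  pointwise; hence \<open>E U(F^\<pi>*) \<le> E U(F~^\<pi>*) + G(\<pi>*) \<le> U(F_p*) + G(\<pi>*)\<close>.
  Conversely the simple policy \<open>\<pi>_p*\<close> is admissible, so by optimality of \<open>\<pi>*\<close>,
  \<open>E U(F^\<pi>*) \<ge> E U(F^\<pi>_p*) \<ge> E U(F~^\<pi>_p*) - G(\<pi>_p*) = U(F_p*) - R~(\<pi>_p*) - G(\<pi>_p*)\<close>.
  Neither the independence of the rewards nor their distributions enter the argument.\<close>

lemma simple_policy_admissible:
  assumes "simple_policy M V K p A"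
  shows "admissible M V X K A"
  unfolding admissible_def
proof (intro allI impI conjI)
  fix t :: nat assume t: "t \<ge> 1"
  show "\<forall>\<omega>\<in>space M. A t \<omega> \<in> {1..K}"
    using assms t by (simp add: simple_policy_def)
  have "measurable (vimage_algebra (space M) V borel) (count_space UNIV)
        \<subseteq> measurable (sigma (space M) (hist_sets M V X A t)) (count_space UNIV)"
    unfolding vimage_algebra_def by (rule measurable_mono1) (auto simp: hist_sets_def)
  moreover have "A t \<in> measurable (vimage_algebra (space M) V borel) (count_space UNIV)"
    using assms t by (simp add: simple_policy_def)
  ultimately show "A t \<in> measurable (sigma (space M) (hist_sets M V X A t)) (count_space UNIV)"
    by blast
qed

lemma sum_tau_eq:
  assumes "\<And>s. s \<in> {1..T} \<Longrightarrow> B s \<omega> \<in> {1..K}"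
  shows "(\<Sum>i=1..K. tau B i T \<omega>) = T"
proof -
  have "(\<Sum>i=1..K. tau B i T \<omega>) = card (\<Union>i\<in>{1..K}. {s \<in> {1..T}. B s \<omega> = i})"
    unfolding tau_def by (rule card_UN_disjoint[symmetric]) auto
  also have "(\<Union>i\<in>{1..K}. {s \<in> {1..T}. B s \<omega> = i}) = {1..T}"
    using assms by auto
  finally show ?thesis by simp
qed

lemma mix_cdf_in_mixtures:
  assumes "\<And>s. s \<in> {1..T} \<Longrightarrow> B s \<omega> \<in> {1..K}" and "T \<ge> 1"
  shows "mix_cdf K F B T \<omega> \<in> mixture K F ` prob_simplex K"
proof
  define p where "p = (\<lambda>i. real (tau B i T \<omega>) / real T)"
  have "(\<Sum>i=1..K. real (tau B i T \<omega>)) = real T"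
    using sum_tau_eq[of T B \<omega> K] assms(1) by (metis of_nat_sum)
  then show "p \<in> prob_simplex K"
    unfolding prob_simplex_def p_def using \<open>T \<ge> 1\<close> by (simp add: sum_divide_distrib[symmetric])
  show "mix_cdf K F B T \<omega> = mixture K F p"
    unfolding mix_cdf_def mixture_def p_def by (simp add: sum_divide_distrib)
qed

lemma (in prob_space) integral_U_mix_cdf_le_max:
  fixes U :: "(real \<Rightarrow> real) \<Rightarrow> real"
  assumes "admissible M V X K B" and "T \<ge> 1"
    and "integrable M (\<lambda>\<omega>. U (mix_cdf K F B T \<omega>))"
    and max: "\<And>p. p \<in> prob_simplex K \<Longrightarrow> U (mixture K F p) \<le> U (mixture K F pstar)"
  shows "(\<integral>\<omega>. U (mix_cdf K F B T \<omega>) \<partial>M) \<le> U (mixture K F pstar)"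
proof (rule integral_le_const[OF assms(3)], rule AE_I2)
  fix \<omega> assume "\<omega> \<in> space M"
  then have "mix_cdf K F B T \<omega> \<in> mixture K F ` prob_simplex K"
    using assms(1,2) by (intro mix_cdf_in_mixtures) (auto simp: admissible_def)
  then show "U (mix_cdf K F B T \<omega>) \<le> U (mixture K F pstar)"
    using max by auto
qed

lemma regret_eq:
  fixes U :: "(real \<Rightarrow> real) \<Rightarrow> real"
  assumes "integrable M (\<lambda>\<omega>. U (emp_cdf X Astar T \<omega>))" "integrable M (\<lambda>\<omega>. U (emp_cdf X A T \<omega>))"
  shows "regret M X U Astar A T
           = (\<integral>\<omega>. U (emp_cdf X Astar T \<omega>) \<partial>M) - (\<integral>\<omega>. U (emp_cdf X A T \<omega>) \<partial>M)"
  unfolding regret_def using assms by (rule Bochner_Integration.integral_diff)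

lemma (in prob_space) proxy_regret_eq:
  fixes U :: "(real \<Rightarrow> real) \<Rightarrow> real"
  assumes "integrable M (\<lambda>\<omega>. U (mix_cdf K F A T \<omega>))"
  shows "proxy_regret M K F U pstar A T
           = U (mixture K F pstar) - (\<integral>\<omega>. U (mix_cdf K F A T \<omega>) \<partial>M)"
  unfolding proxy_regret_def using assms by (simp add: Bochner_Integration.integral_diff prob_space)

lemma gap_eq:
  fixes U :: "(real \<Rightarrow> real) \<Rightarrow> real"
  assumes "integrable M (\<lambda>\<omega>. U (emp_cdf X A T \<omega>))" "integrable M (\<lambda>\<omega>. U (mix_cdf K F A T \<omega>))"
  shows "gap M K X F U A T
           = \<bar>(\<integral>\<omega>. U (emp_cdf X A T \<omega>) \<partial>M) - (\<integral>\<omega>. U (mix_cdf K F A T \<omega>) \<partial>M)\<bar>"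
  unfolding gap_def using assms by (simp add: Bochner_Integration.integral_diff)

theorem lemma16:
  fixes M :: "'a measure" and K :: nat and X :: "nat \<Rightarrow> nat \<Rightarrow> 'a \<Rightarrow> real"
    and V :: "'a \<Rightarrow> real" and F :: "nat \<Rightarrow> real \<Rightarrow> real"
    and U :: "(real \<Rightarrow> real) \<Rightarrow> real" and pstar :: "nat \<Rightarrow> real"
    and A Astar Ap :: "nat \<Rightarrow> 'a \<Rightarrow> nat" and T :: nat
  assumes M: "prob_space M"
    and K: "K \<ge> 1"
    and indep: "prob_space.indep_vars M (\<lambda>_. borel)
                  (\<lambda>j. case j of None \<Rightarrow> V | Some (i, n) \<Rightarrow> X i n)
                  (insert None (Some ` ({1..K} \<times> {1..})))"
    and distr: "\<And>i n y. i \<in> {1..K} \<Longrightarrow> n \<ge> 1 \<Longrightarrow>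
                  measure M {\<omega> \<in> space M. X i n \<omega> \<le> y} = F i y"
    and finite_exp: "\<And>B S. admissible M V X K B \<Longrightarrow> S \<ge> 1 \<Longrightarrow>
                  integrable M (\<lambda>\<omega>. U (emp_cdf X B S \<omega>)) \<and>
                  integrable M (\<lambda>\<omega>. U (mix_cdf K F B S \<omega>))"
    and pstar: "pstar \<in> prob_simplex K"
    and pstar_max: "\<And>p. p \<in> prob_simplex K \<Longrightarrow> U (mixture K F p) \<le> U (mixture K F pstar)"
    and T: "T \<ge> 1"
    and Astar: "admissible M V X K Astar"
    and Astar_max: "\<And>B. admissible M V X K B \<Longrightarrow>
                  integral\<^sup>L M (\<lambda>\<omega>. U (emp_cdf X B T \<omega>))
                  \<le> integral\<^sup>L M (\<lambda>\<omega>. U (emp_cdf X Astar T \<omega>))"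
    and Ap: "simple_policy M V K pstar Ap"
    and A: "admissible M V X K A"
  shows "regret M X U Astar A T - proxy_regret M K F U pstar A T
           \<le> gap M K X F U A T + gap M K X F U Astar T \<and>
         regret M X U Astar A T - proxy_regret M K F U pstar A T
           \<ge> - (gap M K X F U A T + gap M K X F U Ap T + proxy_regret M K F U pstar Ap T)"
proof -
  interpret prob_space M by (rule M)
  have Ap_adm: "admissible M V X K Ap"
    using Ap by (rule simple_policy_admissible)
  note int_A = finite_exp[OF A T] and int_Astar = finite_exp[OF Astar T]
    and int_Ap = finite_exp[OF Ap_adm T]
  have "(\<integral>\<omega>. U (mix_cdf K F Astar T \<omega>) \<partial>M) \<le> U (mixture K F pstar)"
    using Astar T int_Astar pstar_max by (intro integral_U_mix_cdf_le_max) auto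
  moreover have "(\<integral>\<omega>. U (emp_cdf X Ap T \<omega>) \<partial>M) \<le> (\<integral>\<omega>. U (emp_cdf X Astar T \<omega>) \<partial>M)"
    using Ap_adm by (rule Astar_max)
  ultimately show ?thesis
    using int_A int_Astar int_Ap by (simp add: regret_eq proxy_regret_eq gap_eq) linarith
qed

end
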